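(* Assume the setting in the context. Let $x_i, x_j, x_{k_1},\dots,x_{k_m}\in X$ be distinct and $K=\{x_{k_1},\dots,x_{k_m}\}$. Assume that (1) $(x_i,x_j)$ is a visible non-edge (w.r.t. $X$), and (2) for each $q$, $(x_i,x_j)$ is invisible with respect to $X\setminus\{x_{k_q}\}$. Then: (a) for every $q$: for all $M\subseteq X\setminus\{x_i,x_{k_q}\}$, $N\subseteq X\setminus\{x_j,x_{k_q}\}$ and $G_1,G_2\in\mathcal G$, $x_i-G_1(M)\not\perp\!\!\!\perp x_j-G_2(N)$; and (d) there exist $Q_1,Q_2\subseteq K$ with $Q_1\cup Q_2=K$, $G_1,G_2\in\mathcal G$ and $M,N\subseteq X\setminus(\{x_i,x_j\}\cup K)$ such that $x_i-G_1(M\cup Q_1)\perp\!\!\!\perp x_j-G_2(N\cup Q_2)$.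
   Context: Model: $X$ is a finite set of observed random variables and $U$ a finite set of unobserved random variables; $V=X\cup U$ and $G=(V,E)$ is a DAG on $V$. Each $v_i\in V$ satisfies $v_i=\sum_{x_j\in \mathrm{pa}(v_i)\cap X} f^{(i)}_j(x_j)+\sum_{u_k\in\mathrm{pa}(v_i)\cap U} f^{(i)}_k(u_k)+n_i$, where the $f$'s are nonlinear functions and the external noises $n_i$ are jointly independent. "Parent", "ancestor", "path", "d-separation" refer to $G$ (a path has distinct vertices). Causal Faithfulness Condition (CFC): any conditional independence among variables of $V$ that is not entailed by d-separation in $G$ does not hold. $\perp\!\!\!\perp$ denotes statistical independence, $\not\perp\!\!\!\perp$ dependence. Function class: $\mathcal G$ is a class of generalized additive functions: for $G\in\mathcal G$ and a set $M$ of observed variables, $G(M)=\sum_{x_m\in M} g_m(x_m)$ (with $G(\emptyset)=0$). It satisfies: for any $x_i,x_j\in X$, sets $M,N\subseteq X$, $G_1,G_2\in\mathcal G$ and external noise $n_k$, if $n_k\not\perp\!\!\!\perp x_i-G_1(M)$ and $n_k\not\perp\!\!\!\perp x_j-G_2(N)$ then $x_i-G_1(M)\not\perp\!\!\!\perp x_j-G_2(N)$. Definitions, for $X'\subseteq X$ and $x_i,x_j\in X'$: an unobserved causal path (UCP) from $x_i$ to $x_j$ w.r.t. $X'$ is a directed path $x_i\to\cdots\to v_k\to x_j$ in $G$ with $v_k\notin X'$; an unobserved backdoor path (UBP) between $x_i$ and $x_j$ w.r.t. $X'$ is a path $x_i\leftarrow v_k\leftarrow\cdots\leftarrow v\to\cdots\to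 v_l\to x_j$ with $v_k,v_l\notin X'$ (allowing $v=v_k$, $v=v_l$, or $v=v_k=v_l$; $v$ may be in $X'$). "UBP/UCP between $x_i$ and $x_j$" means a UBP or a UCP in either direction. $x_j$ is a visible parent of $x_i$ w.r.t. $X'$ if $x_j$ is a parent of $x_i$ and there is no UBP/UCP between them w.r.t. $X'$; $(x_i,x_j)$ is a visible non-edge w.r.t. $X'$ if there is no edge between them and no UBP/UCP between them w.r.t. $X'$; $(x_i,x_j)$ is invisible w.r.t. $X'$ if there is a UBP/UCP between them w.r.t. $X'$. When $X'$ is omitted, $X'=X$. Standing facts (taken as known), for $X'\subseteq X$ and distinct $x_i,x_j\in X'$: (F1) $x_j$ is a visible parent of $x_i$ w.r.t. $X'$ iff [for all $G_1,G_2\in\mathcal G$, $M\subseteq X'\setminus\{x_i,x_j\}$, $N\subseteq X'\setminus\{x_j\}$: $x_i-G_1(M)\not\perp\!\!\!\perp x_j-G_2(N)$] and [there exist $G_1,G_2\in\mathcal G$, $M\subseteq X'\setminus\{x_i\}$, $N\subseteq X'\setminus\{x_i,x_j\}$ with $x_i-G_1(M)\perp\!\!\!\perp x_j-G_2(N)$]. (F2) $(x_i,x_j)$ is a visible non-edge w.r.t. $X'$ iff there exist $G_1,G_2\in\mathcal G$ and $M,N\subseteq X'\setminus\{x_i,x_j\}$ with $x_i-G_1(M)\perp\!\!\!\perp x_j-G_2(N)$. (F3) $(x_i,x_j)$ is invisible w.r.t. $X'$ iff for all $M\subseteq X'\setminus\{x_i\}$, $N\subseteq X'\setminus\{x_j\}$,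 $G_1,G_2\in\mathcal G$: $x_i-G_1(M)\not\perp\!\!\!\perp x_j-G_2(N)$. *)

theory Defs
  imports "HOL-Probability.Probability"
begin

definition dpath :: "('v \<times> 'v) set \<Rightarrow> 'v list \<Rightarrow> bool" where
  "dpath E p \<longleftrightarrow> p \<noteq> [] \<and> distinct p \<and> (\<forall>i. Suc i < length p \<longrightarrow> (p ! i, p ! Suc i) \<in> E)"

definition upath :: "('v \<times> 'v) set \<Rightarrow> 'v list \<Rightarrow> bool" where
  "upath E p \<longleftrightarrow> p \<noteq> [] \<and> distinct p \<and>
     (\<forall>i. Suc i < length p \<longrightarrow> (p ! i, p ! Suc i) \<in> E \<or> (p ! Suc i, p ! i) \<in> E)"

definition collider :: "('v \<times> 'v) set \<Rightarrow> 'v list \<Rightarrow> nat \<Rightarrow> bool" where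
  "collider E p i \<longleftrightarrow> (p ! (i - 1), p ! i) \<in> E \<and> (p ! Suc i, p ! i) \<in> E"

definition blocked :: "('v \<times> 'v) set \<Rightarrow> 'v set \<Rightarrow> 'v list \<Rightarrow> bool" where
  "blocked E C p \<longleftrightarrow> (\<exists>i. 0 < i \<and> Suc i < length p \<and>
      ((collider E p i \<and> {d. (p ! i, d) \<in> E\<^sup>*} \<inter> C = {}) \<or>
       (\<not> collider E p i \<and> p ! i \<in> C)))"

definition dsep :: "('v \<times> 'v) set \<Rightarrow> 'v set \<Rightarrow> 'v set \<Rightarrow> 'v set \<Rightarrow> bool" where
  "dsep E A B C \<longleftrightarrow> (\<forall>p. upath E p \<and> hd p \<in> A \<and> last p \<in> B \<longrightarrow> blocked E C p)"

text \<open>Unobserved causal path from xi to xj w.r.t. X': xi -> ... -> vk -> xj with vk not in X'.\<close>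
definition UCP :: "('v \<times> 'v) set \<Rightarrow> 'v set \<Rightarrow> 'v \<Rightarrow> 'v \<Rightarrow> bool" where
  "UCP E X' xi xj \<longleftrightarrow> (\<exists>p. dpath E p \<and> hd p = xi \<and> last p = xj \<and>
      length p \<ge> 3 \<and> p ! (length p - 2) \<notin> X')"

text \<open>Unobserved backdoor path between xi and xj w.r.t. X':
  xi <- vk <- ... <- v -> ... -> vl -> xj, vk, vl not in X'.  It is made of a directed path
  p1 from v to xi and a directed path p2 from v to xj sharing only v.\<close>
definition UBP :: "('v \<times> 'v) set \<Rightarrow> 'v set \<Rightarrow> 'v \<Rightarrow> 'v \<Rightarrow> bool" where
  "UBP E X' xi xj \<longleftrightarrow> (\<exists>p1 p2. dpath E p1 \<and> dpath E p2 \<and> hd p1 = hd p2 \<and>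
      last p1 = xi \<and> last p2 = xj \<and> length p1 \<ge> 2 \<and> length p2 \<ge> 2 \<and>
      distinct (rev p1 @ tl p2) \<and>
      p1 ! (length p1 - 2) \<notin> X' \<and> p2 ! (length p2 - 2) \<notin> X')"

definition UBP_UCP_between :: "('v \<times> 'v) set \<Rightarrow> 'v set \<Rightarrow> 'v \<Rightarrow> 'v \<Rightarrow> bool" where
  "UBP_UCP_between E X' xi xj \<longleftrightarrow> UBP E X' xi xj \<or> UCP E X' xi xj \<or> UCP E X' xj xi"

definition visible_parent :: "('v \<times> 'v) set \<Rightarrow> 'v set \<Rightarrow> 'v \<Rightarrow> 'v \<Rightarrow> bool" where
  "visible_parent E X' xi xj \<longleftrightarrow> (xj, xi) \<in> E \<and> \<not> UBP_UCP_between E X' xi xj"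

definition visible_nonedge :: "('v \<times> 'v) set \<Rightarrow> 'v set \<Rightarrow> 'v \<Rightarrow> 'v \<Rightarrow> bool" where
  "visible_nonedge E X' xi xj \<longleftrightarrow> (xi, xj) \<notin> E \<and> (xj, xi) \<notin> E \<and> \<not> UBP_UCP_between E X' xi xj"

definition invisible :: "('v \<times> 'v) set \<Rightarrow> 'v set \<Rightarrow> 'v \<Rightarrow> 'v \<Rightarrow> bool" where
  "invisible E X' xi xj \<longleftrightarrow> UBP_UCP_between E X' xi xj"

definition indep2 :: "'a measure \<Rightarrow> ('a \<Rightarrow> real) \<Rightarrow> ('a \<Rightarrow> real) \<Rightarrow> bool" where
  "indep2 M A B \<longleftrightarrow> prob_space.indep_var M borel A borel B"

definition gen_sigma :: "'a measure \<Rightarrow> ('v \<Rightarrow> 'a \<Rightarrow> real) \<Rightarrow> 'v set \<Rightarrow> 'a measure" where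
  "gen_sigma M Y A = sigma (space M) (\<Union>a\<in>A. {Y a -` B \<inter> space M | B. B \<in> sets borel})"

definition cond_indep :: "'a measure \<Rightarrow> ('v \<Rightarrow> 'a \<Rightarrow> real) \<Rightarrow> 'v set \<Rightarrow> 'v set \<Rightarrow> 'v set \<Rightarrow> bool" where
  "cond_indep M Y A B C \<longleftrightarrow>
     (\<forall>S\<in>sets (gen_sigma M Y A). \<forall>T\<in>sets (gen_sigma M Y B).
        AE \<omega> in M. real_cond_exp M (gen_sigma M Y C) (indicator (S \<inter> T)) \<omega> =
          real_cond_exp M (gen_sigma M Y C) (indicator S) \<omega> *
          real_cond_exp M (gen_sigma M Y C) (indicator T) \<omega>)"

definition CFC :: "'a measure \<Rightarrow> ('v \<times> 'v) set \<Rightarrow> ('v \<Rightarrow> 'a \<Rightarrow> real) \<Rightarrow> bool" where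
  "CFC M E Y \<longleftrightarrow> (\<forall>A B C. A \<inter> B = {} \<and> A \<inter> C = {} \<and> B \<inter> C = {} \<and> cond_indep M Y A B C
       \<longrightarrow> dsep E A B C)"

text \<open>The nonlinear additive model with hidden variables: Y v is the random variable v,
  f v u the (nonlinear) function for the edge u -> v, n v the external noise of v.\<close>
definition additive_model ::
  "'a measure \<Rightarrow> ('v \<times> 'v) set \<Rightarrow> ('v \<Rightarrow> 'a \<Rightarrow> real) \<Rightarrow> ('v \<Rightarrow> 'v \<Rightarrow> real \<Rightarrow> real)
     \<Rightarrow> ('v \<Rightarrow> 'a \<Rightarrow> real) \<Rightarrow> bool" where
  "additive_model M E Y f n \<longleftrightarrow>
     prob_space M \<and> acyclic E \<and>
     (\<forall>v. Y v \<in> borel_measurable M) \<and> (\<forall>v. n v \<in> borel_measurable M) \<and>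
     prob_space.indep_vars M (\<lambda>_. borel) n UNIV \<and>
     (\<forall>u v. (u, v) \<in> E \<longrightarrow> \<not> (\<exists>a b. \<forall>t. f v u t = a * t + b)) \<and>
     (\<forall>v. \<forall>\<omega>\<in>space M. Y v \<omega> = (\<Sum>u\<in>{u. (u, v) \<in> E}. f v u (Y u \<omega>)) + n v \<omega>)"

text \<open>Residual x_i - G(M) for G given by its component functions g.\<close>
definition resid :: "('v \<Rightarrow> 'a \<Rightarrow> real) \<Rightarrow> 'v \<Rightarrow> ('v \<Rightarrow> real \<Rightarrow> real) \<Rightarrow> 'v set \<Rightarrow> 'a \<Rightarrow> real" where
  "resid Y xi g S = (\<lambda>\<omega>. Y xi \<omega> - (\<Sum>m\<in>S. g m (Y m \<omega>)))"

definition class_property ::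
  "'a measure \<Rightarrow> 'v set \<Rightarrow> ('v \<Rightarrow> 'a \<Rightarrow> real) \<Rightarrow> ('v \<Rightarrow> 'a \<Rightarrow> real)
     \<Rightarrow> ('v \<Rightarrow> real \<Rightarrow> real) set \<Rightarrow> bool" where
  "class_property M X Y n \<G> \<longleftrightarrow>
     (\<forall>xi\<in>X. \<forall>xj\<in>X. \<forall>S\<subseteq>X. \<forall>T\<subseteq>X. \<forall>g1\<in>\<G>. \<forall>g2\<in>\<G>. \<forall>k.
        \<not> indep2 M (n k) (resid Y xi g1 S) \<and> \<not> indep2 M (n k) (resid Y xj g2 T)
        \<longrightarrow> \<not> indep2 M (resid Y xi g1 S) (resid Y xj g2 T))"

definition standing_facts ::
  "'a measure \<Rightarrow> ('v \<times> 'v) set \<Rightarrow> 'v set \<Rightarrow> ('v \<Rightarrow> 'a \<Rightarrow> real)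
     \<Rightarrow> ('v \<Rightarrow> real \<Rightarrow> real) set \<Rightarrow> bool" where
  "standing_facts M E X Y \<G> \<longleftrightarrow>
    (\<forall>X'\<subseteq>X. \<forall>xi\<in>X'. \<forall>xj\<in>X'. xi \<noteq> xj \<longrightarrow>
      (visible_parent E X' xi xj \<longleftrightarrow>
         (\<forall>g1\<in>\<G>. \<forall>g2\<in>\<G>. \<forall>S\<subseteq>X' - {xi, xj}. \<forall>T\<subseteq>X' - {xj}.
             \<not> indep2 M (resid Y xi g1 S) (resid Y xj g2 T)) \<and>
         (\<exists>g1\<in>\<G>. \<exists>g2\<in>\<G>. \<exists>S\<subseteq>X' - {xi}. \<exists>T\<subseteq>X' - {xi, xj}.
             indep2 M (resid Y xi g1 S) (resid Y xj g2 T))) \<and>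
      (visible_nonedge E X' xi xj \<longleftrightarrow>
         (\<exists>g1\<in>\<G>. \<exists>g2\<in>\<G>. \<exists>S\<subseteq>X' - {xi, xj}. \<exists>T\<subseteq>X' - {xi, xj}.
             indep2 M (resid Y xi g1 S) (resid Y xj g2 T))) \<and>
      (invisible E X' xi xj \<longleftrightarrow>
         (\<forall>S\<subseteq>X' - {xi}. \<forall>T\<subseteq>X' - {xj}. \<forall>g1\<in>\<G>. \<forall>g2\<in>\<G>.
             \<not> indep2 M (resid Y xi g1 S) (resid Y xj g2 T))))"

end

theory Submission
  imports Defs
begin

text \<open>By (F3), invisibility of (xi, xj) with respect to X - {k} rules out independent residuals
  that avoid k, which is (a). By (F2) the visible non-edge has an independent pair of residuals
  x_i - G1(S), x_j - G2(T); by (a) every k in K must occur in S or T, so splitting S and T into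
  their parts inside and outside K gives (d). Only (F2) and (F3) are used; the model, faithfulness
  and function-class hypotheses enter solely through them.\<close>

lemma standing_facts_visible_nonedgeE:
  assumes "standing_facts M E X Y \<G>" and "X' \<subseteq> X" and "xi \<in> X'" "xj \<in> X'" "xi \<noteq> xj"
    and "visible_nonedge E X' xi xj"
  obtains g1 g2 S T where "g1 \<in> \<G>" "g2 \<in> \<G>" "S \<subseteq> X' - {xi, xj}" "T \<subseteq> X' - {xi, xj}"
    and "indep2 M (resid Y xi g1 S) (resid Y xj g2 T)"
proof -
  have "visible_nonedge E X' xi xj \<longleftrightarrow>
      (\<exists>g1\<in>\<G>. \<exists>g2\<in>\<G>. \<exists>S\<subseteq>X' - {xi, xj}. \<exists>T\<subseteq>X' - {xi, xj}.
         indep2 M (resid Y xi g1 S) (resid Y xj g2 T))"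
    using assms(1)[unfolded standing_facts_def, rule_format, OF assms(2-5)]
    by (rule conjunct1[OF conjunct2])
  with assms(6) that show thesis by blast
qed

lemma standing_facts_invisible_dependent:
  assumes "standing_facts M E X Y \<G>" and "X' \<subseteq> X" and "xi \<in> X'" "xj \<in> X'" "xi \<noteq> xj"
    and "invisible E X' xi xj"
    and "S \<subseteq> X' - {xi}" "T \<subseteq> X' - {xj}" "g1 \<in> \<G>" "g2 \<in> \<G>"
  shows "\<not> indep2 M (resid Y xi g1 S) (resid Y xj g2 T)"
proof -
  have "invisible E X' xi xj \<longleftrightarrow>
      (\<forall>S\<subseteq>X' - {xi}. \<forall>T\<subseteq>X' - {xj}. \<forall>g1\<in>\<G>. \<forall>g2\<in>\<G>.
         \<not> indep2 M (resid Y xi g1 S) (resid Y xj g2 T))"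
    using assms(1)[unfolded standing_facts_def, rule_format, OF assms(2-5)]
    by (rule conjunct2[OF conjunct2])
  with assms(6-10) show ?thesis by blast
qed

lemma standing_facts_invisible_without_dependent:
  assumes "standing_facts M E X Y \<G>" and "xi \<in> X" "xj \<in> X" "xi \<noteq> xj" "k \<noteq> xi" "k \<noteq> xj"
    and "invisible E (X - {k}) xi xj"
    and "S \<subseteq> X - {xi, k}" "T \<subseteq> X - {xj, k}" "g1 \<in> \<G>" "g2 \<in> \<G>"
  shows "\<not> indep2 M (resid Y xi g1 S) (resid Y xj g2 T)"
  by (rule standing_facts_invisible_dependent[of M E X Y \<G> "X - {k}"]) (use assms in auto)

lemma split_covering_pair:
  assumes "S \<subseteq> X - {xi, xj}" "T \<subseteq> X - {xi, xj}" "K \<subseteq> S \<union> T"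
  shows "S = (S - K) \<union> (S \<inter> K)" "T = (T - K) \<union> (T \<inter> K)"
    and "(S \<inter> K) \<union> (T \<inter> K) = K"
    and "S - K \<subseteq> X - ({xi, xj} \<union> K)" "T - K \<subseteq> X - ({xi, xj} \<union> K)"
  using assms by auto

theorem lemma7:
  fixes M :: "'a measure" and E :: "('v::finite \<times> 'v) set"
    and X :: "'v set" and Y :: "'v \<Rightarrow> 'a \<Rightarrow> real"
    and f :: "'v \<Rightarrow> 'v \<Rightarrow> real \<Rightarrow> real" and n :: "'v \<Rightarrow> 'a \<Rightarrow> real"
    and \<G> :: "('v \<Rightarrow> real \<Rightarrow> real) set"
    and xi xj :: 'v and K :: "'v set"
  assumes model: "additive_model M E Y f n"
    and faithful: "CFC M E Y"
    and Gclass: "class_property M X Y n \<G>"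
    and facts: "standing_facts M E X Y \<G>"
    and xi: "xi \<in> X" and xj: "xj \<in> X" and K: "K \<subseteq> X"
    and distinct: "xi \<noteq> xj" "xi \<notin> K" "xj \<notin> K"
    and vis: "visible_nonedge E X xi xj"
    and invis: "\<forall>k\<in>K. invisible E (X - {k}) xi xj"
  shows "(\<forall>k\<in>K. \<forall>S\<subseteq>X - {xi, k}. \<forall>T\<subseteq>X - {xj, k}. \<forall>g1\<in>\<G>. \<forall>g2\<in>\<G>.
            \<not> indep2 M (resid Y xi g1 S) (resid Y xj g2 T)) \<and>
         (\<exists>Q1 Q2. Q1 \<subseteq> K \<and> Q2 \<subseteq> K \<and> Q1 \<union> Q2 = K \<and>
            (\<exists>g1\<in>\<G>. \<exists>g2\<in>\<G>. \<exists>S\<subseteq>X - ({xi, xj} \<union> K). \<exists>T\<subseteq>X - ({xi, xj} \<union> K).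
               indep2 M (resid Y xi g1 (S \<union> Q1)) (resid Y xj g2 (T \<union> Q2))))"
proof -
  have dep: "\<forall>k\<in>K. \<forall>S\<subseteq>X - {xi, k}. \<forall>T\<subseteq>X - {xj, k}. \<forall>g1\<in>\<G>. \<forall>g2\<in>\<G>.
      \<not> indep2 M (resid Y xi g1 S) (resid Y xj g2 T)"
  proof (intro ballI allI impI)
    fix k S T g1 g2
    assume "k \<in> K" "S \<subseteq> X - {xi, k}" "T \<subseteq> X - {xj, k}" "g1 \<in> \<G>" "g2 \<in> \<G>"
    with invis distinct show "\<not> indep2 M (resid Y xi g1 S) (resid Y xj g2 T)"
      by (intro standing_facts_invisible_without_dependent[OF facts xi xj distinct(1)]) auto
  qed
  obtain g1 g2 S T where g: "g1 \<in> \<G>" "g2 \<in> \<G>"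
    and S: "S \<subseteq> X - {xi, xj}" and T: "T \<subseteq> X - {xi, xj}"
    and ind: "indep2 M (resid Y xi g1 S) (resid Y xj g2 T)"
    using standing_facts_visible_nonedgeE[OF facts subset_refl xi xj distinct(1) vis] .
  have "K \<subseteq> S \<union> T"
  proof
    fix k assume k: "k \<in> K"
    show "k \<in> S \<union> T"
    proof (rule ccontr)
      assume "k \<notin> S \<union> T"
      then have "S \<subseteq> X - {xi, k}" "T \<subseteq> X - {xj, k}" using S T by auto
      then show False using dep k g ind by blast
    qed
  qed
  note split = split_covering_pair[OF S T this]
  have "indep2 M (resid Y xi g1 ((S - K) \<union> (S \<inter> K))) (resid Y xj g2 ((T - K) \<union> (T \<inter> K)))"
    using ind split(1,2) by simp
  then have "\<exists>g1\<in>\<G>. \<exists>g2\<in>\<G>. \<exists>S'\<subseteq>X - ({xi, xj} \<union> K). \<exists>T'\<subseteq>X - ({xi, xj} \<union> K).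
      indep2 M (resid Y xi g1 (S' \<union> (S \<inter> K))) (resid Y xj g2 (T' \<union> (T \<inter> K)))"
    using g split(4,5) by blast
  with dep split(3) show ?thesis
    by (intro conjI exI[of _ "S \<inter> K"] exI[of _ "T \<inter> K"]) auto
qed

end
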